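(* Let $A$ be a finite set of alternatives with $|A|\ge 3$, let $N=\{1,\dots,n\}$ with $n\ge 2$, and let $\mathbb{D}$ be a minimally rich domain of linear orders over $A$ that is connected with two distinct neighbours. If $f:\mathbb{D}^n\to A$ is unanimous, tops-only and locally strategy-proof, then $f$ satisfies dictatorship.
   Context: A domain is a set $\mathbb{D}$ of linear orders (strict preferences) over $A$; a preference profile is $P=(P_1,\dots,P_n)\in\mathbb{D}^n$. For a linear order $P_i$, $r_k(P_i)$ is its $k$-th ranked alternative. $\mathbb{D}$ is minimally rich if every $a\in A$ is ranked first in some $P_i\in\mathbb{D}$. Two linear orders $P_i,P_i'$ are adjacent ($P_i\sim P_i'$) if $P_i'$ is obtained from $P_i$ by swapping two consecutively ranked alternatives and leaving all other ranks unchanged. A social choice function (scf) is a map $f:\mathbb{D}^n\to A$. It is unanimous if $f(P)=a$ whenever every voter ranks $a$ first. It is locally strategy-proof if there is no voter $i$, profile $P$, and $P_i'\in\mathbb{D}$ with $P_i'\sim P_i$ such that $f(P_i',P_{-i})\,P_i\,f(P_i,P_{-i})$. It is tops-only if $f(P)=f(P')$ whenever $r_1(P_i)=r_1(P_i')$ for all $i$. It satisfies dictatorship if there is a voter $i$ with $f(P)=r_1(P_i)$ for all $P\in\mathbb{D}^n$. A path in $\mathbb{D}$ is a sequence of distinct preferences in $\mathbb{D}$ in which consecutive ones are adjacent; $\mathbb{D}$ is connected if any two of its preferences are joined by a path in $\mathbb{D}$. For $\bar{\mathbb{D}}\subseteq\mathbb{D}$, a neighbour of $\bar{\mathbb{D}}$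 in $\mathbb{D}$ is a $P_i\in\mathbb{D}\setminus\bar{\mathbb{D}}$ adjacent to some element of $\bar{\mathbb{D}}$. Two preferences $P_i,P_i'\in\mathbb{D}$ are top-connected in $\mathbb{D}$ if there is a path from $P_i$ to $P_i'$ in $\mathbb{D}$ all of whose members have the same top-ranked alternative. The top-connected closure $\mathbb{D}^{TCC}(P_i)$ is the set of preferences in $\mathbb{D}$ top-connected to $P_i$, together with $P_i$. $\mathbb{D}$ is connected with two distinct neighbours if (1) $\mathbb{D}$ is connected, and (2) for every $P_i\in\mathbb{D}$ there exist two neighbours $P_i',P_i''$ of $\mathbb{D}^{TCC}(P_i)$ in $\mathbb{D}$ with $r_1(P_i')\ne r_1(P_i'')$. *)

theory Defs
  imports "HOL-Library.FuncSet"
begin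

text \<open>A linear order (strict preference) over A is represented by the list of the
elements of A from best to worst. r_k(L) is L ! (k-1); the top is hd L.\<close>

definition linord :: "'a set \<Rightarrow> 'a list \<Rightarrow> bool" where
  "linord A L \<longleftrightarrow> distinct L \<and> set L = A"

definition prefers :: "'a list \<Rightarrow> 'a \<Rightarrow> 'a \<Rightarrow> bool" where
  "prefers L x y \<longleftrightarrow> (\<exists>i j. i < j \<and> j < length L \<and> L ! i = x \<and> L ! j = y)"

definition top :: "'a list \<Rightarrow> 'a" where
  "top L = hd L"

text \<open>Adjacency: swap the alternatives ranked k+1 and k+2 (0-based k, k+1).\<close>
definition adjacent :: "'a list \<Rightarrow> 'a list \<Rightarrow> bool" where
  "adjacent L L' \<longleftrightarrow>
     (\<exists>k. Suc k < length L \<and> L' = L[k := L ! Suc k, Suc k := L ! k])"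

definition minimally_rich :: "'a set \<Rightarrow> 'a list set \<Rightarrow> bool" where
  "minimally_rich A D \<longleftrightarrow> (\<forall>a\<in>A. \<exists>L\<in>D. top L = a)"

definition is_path :: "'a list set \<Rightarrow> 'a list list \<Rightarrow> bool" where
  "is_path D ps \<longleftrightarrow> ps \<noteq> [] \<and> distinct ps \<and> set ps \<subseteq> D \<and>
     (\<forall>k. Suc k < length ps \<longrightarrow> adjacent (ps ! k) (ps ! Suc k))"

definition dom_connected :: "'a list set \<Rightarrow> bool" where
  "dom_connected D \<longleftrightarrow>
     (\<forall>L\<in>D. \<forall>L'\<in>D. \<exists>ps. is_path D ps \<and> hd ps = L \<and> last ps = L')"

definition top_connected :: "'a list set \<Rightarrow> 'a list \<Rightarrow> 'a list \<Rightarrow> bool" where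
  "top_connected D L L' \<longleftrightarrow> L \<in> D \<and> L' \<in> D \<and>
     (\<exists>ps. is_path D ps \<and> hd ps = L \<and> last ps = L' \<and> (\<forall>Q\<in>set ps. top Q = top L))"

definition TCC :: "'a list set \<Rightarrow> 'a list \<Rightarrow> 'a list set" where
  "TCC D L = {L' \<in> D. top_connected D L L'} \<union> {L}"

definition neighbour :: "'a list set \<Rightarrow> 'a list set \<Rightarrow> 'a list \<Rightarrow> bool" where
  "neighbour D S Q \<longleftrightarrow> Q \<in> D \<and> Q \<notin> S \<and> (\<exists>R\<in>S. adjacent R Q)"

definition connected_two_neighbours :: "'a list set \<Rightarrow> bool" where
  "connected_two_neighbours D \<longleftrightarrow> dom_connected D \<and>
     (\<forall>L\<in>D. \<exists>Q1 Q2. neighbour D (TCC D L) Q1 \<and> neighbour D (TCC D L) Q2 \<and> top Q1 \<noteq> top Q2)"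

text \<open>Profiles: voters are 0..n-1; a profile is an extensional function on {..<n}.\<close>
definition profiles :: "nat \<Rightarrow> 'a list set \<Rightarrow> (nat \<Rightarrow> 'a list) set" where
  "profiles n D = {..<n} \<rightarrow>\<^sub>E D"

definition unanimous :: "nat \<Rightarrow> 'a list set \<Rightarrow> ((nat \<Rightarrow> 'a list) \<Rightarrow> 'a) \<Rightarrow> bool" where
  "unanimous n D f \<longleftrightarrow>
     (\<forall>P\<in>profiles n D. \<forall>a. (\<forall>i<n. top (P i) = a) \<longrightarrow> f P = a)"

definition locally_sp :: "nat \<Rightarrow> 'a list set \<Rightarrow> ((nat \<Rightarrow> 'a list) \<Rightarrow> 'a) \<Rightarrow> bool" where
  "locally_sp n D f \<longleftrightarrow>
     (\<forall>P\<in>profiles n D. \<forall>i<n. \<forall>Q\<in>D. adjacent (P i) Q \<longrightarrow>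
        \<not> prefers (P i) (f (P(i := Q))) (f P))"

definition tops_only :: "nat \<Rightarrow> 'a list set \<Rightarrow> ((nat \<Rightarrow> 'a list) \<Rightarrow> 'a) \<Rightarrow> bool" where
  "tops_only n D f \<longleftrightarrow>
     (\<forall>P\<in>profiles n D. \<forall>P'\<in>profiles n D. (\<forall>i<n. top (P i) = top (P' i)) \<longrightarrow> f P = f P')"

definition dictatorship :: "nat \<Rightarrow> 'a list set \<Rightarrow> ((nat \<Rightarrow> 'a list) \<Rightarrow> 'a) \<Rightarrow> bool" where
  "dictatorship n D f \<longleftrightarrow> (\<exists>i<n. \<forall>P\<in>profiles n D. f P = top (P i))"

end

theory Submission
  imports Defs
begin

text \<open>Join two alternatives when they are the tops of adjacent preferences of the domain; in
this top graph every alternative has two distinct neighbours and the graph is connected. A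
tops-only rule is a function of the tops, and local strategy-proofness says that when a voter
moves her top along an edge, the outcome either stays put or was her old top and follows her to
the new one. Call \<open>T\<close> decisive for \<open>b\<close> over \<open>a\<close> if \<open>b\<close> wins when \<open>T\<close> reports \<open>b\<close> and everybody
else \<open>a\<close>. Moving voters while avoiding the current outcome shows that decisive coalitions are
upward closed, that for \<open>c \<noteq> a\<close> decisiveness for \<open>c\<close> over \<open>b\<close> implies decisiveness for \<open>b\<close> over
\<open>a\<close>, and that some single voter is decisive for \<open>b\<close> over \<open>a\<close> if \<open>c\<close> reaches \<open>a\<close> without passing
\<open>b\<close>. A non-backtracking walk in a finite graph of minimum degree two runs into this situation,
so every edge has a pivotal voter; the pivotal voters of the two directions of an edge coincide
and decide every coalition, adjacent edges share them, and by connectedness this voter is a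
dictator.\<close>

section \<open>Unanimous rules on a graph that respond only along edges\<close>

definition pair_profile :: "'a \<Rightarrow> 'a \<Rightarrow> nat set \<Rightarrow> nat \<Rightarrow> 'a" where
  "pair_profile a b T = override_on (\<lambda>_. a) (\<lambda>_. b) T"

text \<open>Voters report vertices of the graph \<open>E\<close> on \<open>A\<close>; in the application these are the tops of
their preferences and \<open>E\<close> is the top graph.\<close>

locale graph_scf =
  fixes A :: "'a set" and E :: "'a \<Rightarrow> 'a \<Rightarrow> bool" and n :: nat
    and g :: "(nat \<Rightarrow> 'a) \<Rightarrow> 'a"
  assumes finite_A: "finite A"
    and A_nonempty: "A \<noteq> {}"
    and E_sym: "E a b \<Longrightarrow> E b a"
    and E_irrefl: "E a b \<Longrightarrow> a \<noteq> b"
    and E_in_A: "E a b \<Longrightarrow> a \<in> A \<and> b \<in> A"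
    and two_neighbours: "a \<in> A \<Longrightarrow> \<exists>b c. E a b \<and> E a c \<and> b \<noteq> c"
    and E_connected: "a \<in> A \<Longrightarrow> b \<in> A \<Longrightarrow> E\<^sup>*\<^sup>* a b"
    and g_cong: "(\<And>i. i < n \<Longrightarrow> x i = y i) \<Longrightarrow> g x = g y"
    and g_in_A: "(\<And>i. i < n \<Longrightarrow> x i \<in> A) \<Longrightarrow> g x \<in> A"
    and g_unanimous: "a \<in> A \<Longrightarrow> (\<And>i. i < n \<Longrightarrow> x i = a) \<Longrightarrow> g x = a"
    and g_move_along_edge: "(\<And>j. j < n \<Longrightarrow> x j \<in> A) \<Longrightarrow> E (x i) b \<Longrightarrow>
       g (x(i := b)) = g x \<or> (g x = x i \<and> g (x(i := b)) = b)"
begin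

definition avoiding :: "'a \<Rightarrow> 'a \<Rightarrow> 'a \<Rightarrow> bool" where
  "avoiding w x y \<longleftrightarrow> E x y \<and> x \<noteq> w \<and> y \<noteq> w"

lemma avoiding_rtranclp_in_A: "(avoiding w)\<^sup>*\<^sup>* a b \<Longrightarrow> a \<in> A \<Longrightarrow> b \<in> A"
  by (induction rule: rtranclp_induct) (auto simp: avoiding_def dest: E_in_A)

lemma outcome_stays_along_edge:
  assumes "g x = w" "\<forall>j<n. x j \<in> A" "x i \<noteq> w" "E (x i) b"
  shows "g (x(i := b)) = w"
  using g_move_along_edge[of x i b] assms by auto

lemma outcome_stays_avoiding:
  assumes "(avoiding w)\<^sup>*\<^sup>* (x i) y" "g x = w" "\<forall>j<n. x j \<in> A"
  shows "g (x(i := y)) = w"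
  using assms(1)
proof (induction y rule: rtranclp_induct)
  case base
  then show ?case using assms(2) by simp
next
  case (step y z)
  have "\<forall>j<n. (x(i := y)) j \<in> A"
    using avoiding_rtranclp_in_A[OF step(1)] assms(3) by (cases "i < n") auto
  moreover have "(x(i := y)) i \<noteq> w" "E ((x(i := y)) i) z"
    using step(2) by (auto simp: avoiding_def)
  ultimately have "g ((x(i := y))(i := z)) = w" by (rule outcome_stays_along_edge[OF step.IH])
  then show ?case by (simp only: fun_upd_upd)
qed

lemma last_edge_avoiding:
  assumes "E\<^sup>*\<^sup>* u w" "u \<noteq> w"
  shows "\<exists>v. (avoiding w)\<^sup>*\<^sup>* u v \<and> E v w"
  using assms
proof (induction rule: converse_rtranclp_induct)
  case (step u u')
  show ?case
  proof (cases "u' = w")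
    case True
    then show ?thesis using step by auto
  next
    case False
    then obtain v where "(avoiding w)\<^sup>*\<^sup>* u' v" "E v w" using step by auto
    moreover have "avoiding w u u'" using step False by (simp add: avoiding_def)
    ultimately show ?thesis by (meson converse_rtranclp_into_rtranclp)
  qed
qed simp

lemma outcome_stays_moving_to_outcome:
  assumes "g x = w" "w \<in> A" "\<forall>j<n. x j \<in> A"
  shows "g (x(i := w)) = w"
proof (cases "i < n \<and> x i \<noteq> w")
  case True
  then obtain v where v: "(avoiding w)\<^sup>*\<^sup>* (x i) v" "E v w"
    using last_edge_avoiding E_connected assms by blast
  have "g (x(i := v)) = w" by (rule outcome_stays_avoiding[OF v(1) assms(1,3)])
  moreover have "\<forall>j<n. (x(i := v)) j \<in> A" using assms(3) E_in_A[OF v(2)] by simp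
  moreover have "(x(i := v)) i \<noteq> w" "E ((x(i := v)) i) w" using E_irrefl[OF v(2)] v(2) by auto
  ultimately have "g ((x(i := v))(i := w)) = w" by (rule outcome_stays_along_edge)
  then show ?thesis by simp
next
  case False
  then show ?thesis using assms(1) g_cong[of "x(i := w)" x] by (cases "x i = w") auto
qed

lemma outcome_stays_avoiding_set:
  assumes "finite V" "g x = w" "\<forall>j<n. x j \<in> A" "\<forall>j\<in>V. (avoiding w)\<^sup>*\<^sup>* (x j) (y j)"
  shows "g (override_on x y V) = w"
  using assms(1,4)
proof (induction V rule: finite_induct)
  case (insert i V)
  have "\<forall>j<n. override_on x y V j \<in> A"
    using assms(3) insert avoiding_rtranclp_in_A by (auto simp: override_on_def)
  then have "g ((override_on x y V)(i := y i)) = w"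
    using insert by (intro outcome_stays_avoiding) auto
  then show ?case by (simp only: override_on_insert)
qed (simp add: assms(2))

lemma outcome_stays_moving_to_outcome_set:
  assumes "finite V" "g x = w" "w \<in> A" "\<forall>j<n. x j \<in> A"
  shows "g (override_on x (\<lambda>_. w) V) = w"
  using assms(1)
proof (induction V rule: finite_induct)
  case (insert i V)
  have "\<forall>j<n. override_on x (\<lambda>_. w) V j \<in> A"
    using assms(3,4) by (auto simp: override_on_def)
  then have "g ((override_on x (\<lambda>_. w) V)(i := w)) = w"
    using insert assms(3) by (intro outcome_stays_moving_to_outcome) auto
  then show ?case by (simp only: override_on_insert)
qed (simp add: assms(2))

definition decisive :: "'a \<Rightarrow> 'a \<Rightarrow> nat set \<Rightarrow> bool" where
  "decisive a b T \<longleftrightarrow> g (pair_profile a b T) = b"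

lemma pair_profile_in_A: "a \<in> A \<Longrightarrow> b \<in> A \<Longrightarrow> \<forall>j<n. pair_profile a b T j \<in> A"
  by (simp add: pair_profile_def override_on_def)

lemma pair_profile_outcome:
  assumes "E a b"
  shows "g (pair_profile a b T) \<in> {a, b}"
proof (rule ccontr)
  define w where "w = g (pair_profile a b T)"
  assume "g (pair_profile a b T) \<notin> {a, b}"
  then have "avoiding w a b" using assms by (auto simp: w_def avoiding_def)
  then have "\<forall>j\<in>{..<n}. (avoiding w)\<^sup>*\<^sup>* (pair_profile a b T j) b"
    by (auto simp: pair_profile_def override_on_def)
  then have "g (override_on (pair_profile a b T) (\<lambda>_. b) {..<n}) = w"
    using pair_profile_in_A E_in_A[OF assms]
    by (intro outcome_stays_avoiding_set) (auto simp: w_def)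
  moreover have "g (override_on (pair_profile a b T) (\<lambda>_. b) {..<n}) = b"
    using E_in_A[OF assms] by (intro g_unanimous) auto
  ultimately show False using \<open>avoiding w a b\<close> by (simp add: avoiding_def)
qed

lemma decisive_mono:
  assumes "E a b" "decisive a b S" "S \<subseteq> T" "T \<subseteq> {..<n}"
  shows "decisive a b T"
proof -
  have "override_on (pair_profile a b S) (\<lambda>_. b) (T - S) = pair_profile a b T"
    using assms(3) by (auto simp: pair_profile_def override_on_def fun_eq_iff)
  moreover have "g (override_on (pair_profile a b S) (\<lambda>_. b) (T - S)) = b"
    using assms E_in_A[OF assms(1)] pair_profile_in_A[of a b]
    by (intro outcome_stays_moving_to_outcome_set) (auto simp: decisive_def intro: finite_subset)
  ultimately show ?thesis by (simp add: decisive_def)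
qed

lemma pair_profile_swap:
  "T \<subseteq> {..<n} \<Longrightarrow> g (pair_profile b a T) = g (pair_profile a b ({..<n} - T))"
  by (rule g_cong) (auto simp: pair_profile_def override_on_def)

lemma decisive_swap:
  assumes "E a b" "T \<subseteq> {..<n}"
  shows "decisive b a T \<longleftrightarrow> \<not> decisive a b ({..<n} - T)"
  using pair_profile_swap[OF assms(2)] pair_profile_outcome[OF assms(1)] E_irrefl[OF assms(1)]
  unfolding decisive_def by auto

lemma decisive_backward:
  assumes ab: "E a b" and bc: "E b c" and "a \<noteq> c" and T: "T \<subseteq> {..<n}"
    and "decisive b c T"
  shows "decisive a b T"
proof -
  have A: "a \<in> A" "b \<in> A" "c \<in> A" using E_in_A ab bc by auto
  have "g (override_on (pair_profile b c T) (\<lambda>_. a) ({..<n} - T)) = c"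
    using assms E_irrefl[OF bc] E_sym[OF ab] pair_profile_in_A[of b c] A
    by (intro outcome_stays_avoiding_set)
       (auto simp: decisive_def avoiding_def pair_profile_def)
  moreover have "g (override_on (pair_profile b c T) (\<lambda>_. a) ({..<n} - T)) = g (pair_profile a c T)"
    by (rule g_cong) (auto simp: pair_profile_def override_on_def)
  ultimately have ac: "g (pair_profile a c T) = c" by simp
  have "g (pair_profile a b T) \<noteq> a"
  proof
    assume "g (pair_profile a b T) = a"
    then have "g (override_on (pair_profile a b T) (\<lambda>_. c) T) = a"
      using assms E_irrefl[OF ab] pair_profile_in_A[of a b] A
      by (intro outcome_stays_avoiding_set)
         (auto simp: avoiding_def pair_profile_def intro: finite_subset)
    moreover have "override_on (pair_profile a b T) (\<lambda>_. c) T = pair_profile a c T"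
      by (auto simp: pair_profile_def override_on_def fun_eq_iff)
    ultimately show False using ac \<open>a \<noteq> c\<close> by simp
  qed
  then show ?thesis using pair_profile_outcome[OF ab, of T] by (simp add: decisive_def)
qed

text \<open>Relocating voters so as to
avoid the outcome turns each possible outcome into one of the two conclusions or a
contradiction.\<close>

lemma decisive_insert_split:
  assumes ab: "E a b" and bc: "E b c" and "a \<noteq> c" and ca: "(avoiding b)\<^sup>*\<^sup>* c a"
    and iU: "insert i U \<subseteq> {..<n}" "i \<notin> U" and dec: "decisive a b (insert i U)"
  shows "decisive a b {i} \<or> decisive a b U"
proof -
  have A: "a \<in> A" "b \<in> A" "c \<in> A" using E_in_A ab bc by auto
  have "a \<noteq> b" "b \<noteq> c" using E_irrefl ab bc by auto
  define p where "p = (pair_profile a c U)(i := b)"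
  have p: "\<forall>j<n. p j \<in> A" "finite U" "\<forall>j. p j \<in> {a, b, c}"
    using A iU by (auto simp: p_def pair_profile_def override_on_def intro: finite_subset)
  consider "g p = a" | "g p = b" | "g p = c" | "g p \<notin> {a, b, c}" by blast
  then show ?thesis
  proof cases
    case 1
    then have "g (override_on p (\<lambda>_. b) U) = a"
      using p E_sym[OF bc] \<open>a \<noteq> c\<close> \<open>a \<noteq> b\<close>
      by (intro outcome_stays_avoiding_set) (auto simp: p_def pair_profile_def avoiding_def)
    moreover have "override_on p (\<lambda>_. b) U = pair_profile a b (insert i U)"
      by (auto simp: p_def pair_profile_def override_on_def fun_eq_iff)
    ultimately show ?thesis using dec \<open>a \<noteq> b\<close> by (simp add: decisive_def)
  next
    case 2
    then have "g (override_on p (\<lambda>_. a) U) = b"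
      using p ca iU by (intro outcome_stays_avoiding_set) (auto simp: p_def pair_profile_def)
    moreover have "override_on p (\<lambda>_. a) U = pair_profile a b {i}"
      using iU by (auto simp: p_def pair_profile_def override_on_def fun_eq_iff)
    ultimately show ?thesis by (simp add: decisive_def)
  next
    case 3
    then have "g (override_on p (\<lambda>_. b) ({..<n} - insert i U)) = c"
      using p ab \<open>a \<noteq> c\<close> \<open>b \<noteq> c\<close>
      by (intro outcome_stays_avoiding_set) (auto simp: p_def pair_profile_def avoiding_def)
    moreover have "g (override_on p (\<lambda>_. b) ({..<n} - insert i U)) = g (pair_profile b c U)"
      using iU by (intro g_cong) (auto simp: p_def pair_profile_def override_on_def)
    ultimately have "decisive b c U" by (simp add: decisive_def)
    then show ?thesis using decisive_backward ab bc \<open>a \<noteq> c\<close> iU by blast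
  next
    case 4
    then have "avoiding (g p) a b" "avoiding (g p) c b"
      using ab E_sym[OF bc] by (auto simp: avoiding_def)
    then have "\<forall>j\<in>{..<n}. (avoiding (g p))\<^sup>*\<^sup>* (p j) b"
      using p(3) by (metis empty_iff insertE r_into_rtranclp rtranclp.rtrancl_refl)
    then have "g (override_on p (\<lambda>_. b) {..<n}) = g p"
      using p by (intro outcome_stays_avoiding_set) auto
    moreover have "g (override_on p (\<lambda>_. b) {..<n}) = b" using A by (intro g_unanimous) auto
    ultimately show ?thesis using 4 by simp
  qed
qed

lemma decisive_singleton_of_cycle:
  assumes "E a b" "E b c" "a \<noteq> c" "(avoiding b)\<^sup>*\<^sup>* c a"
    and "finite U" "U \<subseteq> {..<n}" "decisive a b U"
  shows "\<exists>d\<in>U. decisive a b {d}"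
  using assms(5-7)
proof (induction U rule: finite_induct)
  case empty
  have "g (pair_profile a b {}) = a"
    using E_in_A[OF assms(1)] by (intro g_unanimous) (auto simp: pair_profile_def)
  then show ?case using empty E_irrefl[OF assms(1)] by (simp add: decisive_def)
next
  case (insert i U)
  then show ?case using decisive_insert_split[OF assms(1-4)] by blast
qed

text \<open>Induction on the number of vertices reachable from \<open>b\<close> without passing \<open>a\<close>: this set
shrinks when the edge \<open>a b\<close> is continued to \<open>b c\<close>, unless \<open>c\<close> reaches \<open>a\<close> without passing \<open>b\<close>.\<close>

lemma pivotal_voter:
  assumes "E a b"
  shows "\<exists>d<n. decisive a b {d}"
  using assms
proof (induction "card {x. (avoiding a)\<^sup>*\<^sup>* b x}" arbitrary: a b rule: less_induct)
  case less
  obtain c where bc: "E b c" "c \<noteq> a"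
    using two_neighbours E_in_A[OF less.prems] by blast
  show ?case
  proof (cases "(avoiding b)\<^sup>*\<^sup>* c a")
    case True
    have "decisive a b {..<n}"
      using E_in_A[OF less.prems] by (simp add: decisive_def pair_profile_def g_unanimous)
    then show ?thesis
      using decisive_singleton_of_cycle[OF less.prems bc(1) bc(2)[symmetric] True] by blast
  next
    case False
    have "(avoiding a)\<^sup>*\<^sup>* b x" if "(avoiding b)\<^sup>*\<^sup>* c x" for x
      using that
    proof (induction rule: rtranclp_induct)
      case base
      then show ?case using bc less.prems E_irrefl by (auto simp: avoiding_def)
    next
      case (step y z)
      have "y \<noteq> a" "z \<noteq> a"
        using False step(1,2) by (auto intro: rtranclp.rtrancl_into_rtrancl)
      then show ?case using step by (auto simp: avoiding_def intro: rtranclp.rtrancl_into_rtrancl)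
    qed
    moreover have "\<not> (avoiding b)\<^sup>*\<^sup>* c b"
      using E_irrefl[OF bc(1)] by (metis avoiding_def rtranclp.cases)
    ultimately have "{x. (avoiding b)\<^sup>*\<^sup>* c x} \<subset> {x. (avoiding a)\<^sup>*\<^sup>* b x}" by blast
    moreover have "finite {x. (avoiding a)\<^sup>*\<^sup>* b x}"
      using avoiding_rtranclp_in_A E_in_A[OF less.prems] finite_A
      by (metis (no_types, lifting) mem_Collect_eq rev_finite_subset subsetI)
    ultimately obtain d where "d < n" "decisive b c {d}"
      using less.hyps bc(1) by (meson psubset_card_mono)
    then show ?thesis
      using decisive_backward[OF less.prems bc(1) bc(2)[symmetric]] by auto
  qed
qed

definition dictates :: "'a \<Rightarrow> 'a \<Rightarrow> nat \<Rightarrow> bool" where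
  "dictates a b d \<longleftrightarrow> d < n \<and> (\<forall>T\<subseteq>{..<n}. decisive a b T \<longleftrightarrow> d \<in> T)"

lemma dictates_unique:
  assumes "dictates a b d" "dictates a b d'"
  shows "d = d'"
proof -
  have "{d} \<subseteq> {..<n}" using assms(1) by (simp add: dictates_def)
  then show ?thesis using assms unfolding dictates_def by blast
qed

lemma dictates_swap:
  assumes ab: "E a b" and d: "dictates a b d"
  shows "dictates b a d"
proof -
  have "decisive b a T \<longleftrightarrow> d \<in> T" if T: "T \<subseteq> {..<n}" for T
  proof -
    have "decisive b a T \<longleftrightarrow> \<not> decisive a b ({..<n} - T)" by (rule decisive_swap[OF ab T])
    also have "\<dots> \<longleftrightarrow> d \<in> T" using d unfolding dictates_def by auto
    finally show ?thesis .
  qed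
  then show ?thesis using d unfolding dictates_def by blast
qed

lemma edge_dictator:
  assumes ab: "E a b"
  shows "\<exists>d. dictates a b d"
proof -
  obtain d where d: "d < n" "decisive a b {d}" using pivotal_voter[OF ab] by blast
  obtain d' where d': "d' < n" "decisive b a {d'}" using pivotal_voter[OF E_sym[OF ab]] by blast
  have "d = d'"
  proof (rule ccontr)
    assume "d \<noteq> d'"
    then have "decisive a b ({..<n} - {d'})" using d by (intro decisive_mono[OF ab d(2)]) auto
    then show False using d' decisive_swap[OF ab, of "{d'}"] by simp
  qed
  have "decisive a b T \<longleftrightarrow> d \<in> T" if T: "T \<subseteq> {..<n}" for T
  proof
    show "d \<in> T \<Longrightarrow> decisive a b T" using T by (intro decisive_mono[OF ab d(2)]) auto
  next
    assume dec: "decisive a b T"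
    show "d \<in> T"
    proof (rule ccontr)
      assume "d \<notin> T"
      then have "decisive b a ({..<n} - T)"
        using \<open>d = d'\<close> d' by (intro decisive_mono[OF E_sym[OF ab] d'(2)]) auto
      moreover have "{..<n} - ({..<n} - T) = T" using T by blast
      ultimately show False using dec decisive_swap[OF ab, of "{..<n} - T"] by simp
    qed
  qed
  then show ?thesis using d(1) unfolding dictates_def by blast
qed

lemma dictates_adjacent:
  assumes ab: "E a b" and bc: "E b c" and "dictates a b d" "dictates b c d'"
  shows "d = d'"
proof (cases "a = c")
  case True
  then show ?thesis using dictates_unique[OF dictates_swap[OF ab assms(3)]] assms(4) by simp
next
  case False
  have "decisive b c {d'}" using assms(4) unfolding dictates_def by simp
  then have "decisive a b {d'}" using decisive_backward[OF ab bc False] assms(4)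
    unfolding dictates_def by simp
  moreover have "{d'} \<subseteq> {..<n}" using assms(4) by (simp add: dictates_def)
  ultimately show ?thesis using assms(3) unfolding dictates_def by blast
qed

lemma common_dictator: "\<exists>d<n. \<forall>a b. E a b \<longrightarrow> dictates a b d"
proof -
  obtain a0 where "a0 \<in> A" using A_nonempty by blast
  then obtain b0 where a0b0: "E a0 b0" using two_neighbours by blast
  obtain d where d: "dictates a0 b0 d" using edge_dictator[OF a0b0] by blast
  have reach: "\<exists>u. E u w \<and> dictates u w d" if "E\<^sup>*\<^sup>* b0 w" for w
    using that
  proof (induction rule: rtranclp_induct)
    case (step w w')
    then obtain u where u: "E u w" "dictates u w d" by blast
    obtain d' where d': "dictates w w' d'" using edge_dictator[OF step(2)] by blast
    then have "dictates w w' d" using dictates_adjacent[OF u(1) step(2) u(2) d'] by simp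
    then show ?case using step(2) by blast
  qed (use a0b0 d in blast)
  have "dictates a b d" if ab: "E a b" for a b
  proof -
    have "E\<^sup>*\<^sup>* b0 a" using E_in_A[OF a0b0] E_in_A[OF ab] by (intro E_connected) auto
    then obtain u where u: "E u a" "dictates u a d" using reach by blast
    obtain d' where d': "dictates a b d'" using edge_dictator[OF ab] by blast
    then show ?thesis using dictates_adjacent[OF u(1) ab u(2) d'] by simp
  qed
  moreover have "d < n" using d by (simp add: dictates_def)
  ultimately show ?thesis by blast
qed

theorem dictator_exists: "\<exists>d<n. \<forall>x. (\<forall>j<n. x j \<in> A) \<longrightarrow> g x = x d"
proof -
  obtain d where d: "d < n" "\<And>a b. E a b \<Longrightarrow> dictates a b d" using common_dictator by blast
  have "g x = x d" if x: "\<forall>j<n. x j \<in> A" for x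
  proof (rule ccontr)
    define w where "w = g x"
    have w: "w \<in> A" using x unfolding w_def by (intro g_in_A) auto
    assume "g x \<noteq> x d"
    then have "x d \<noteq> w" by (simp add: w_def)
    moreover have "E\<^sup>*\<^sup>* (x d) w" using x d(1) w by (intro E_connected) auto
    ultimately obtain v where v: "(avoiding w)\<^sup>*\<^sup>* (x d) v" "E v w"
      using last_edge_avoiding by blast
    define x' where "x' = override_on x (\<lambda>_. w) ({..<n} - {d})"
    have "g x' = w" unfolding x'_def
      using x w by (intro outcome_stays_moving_to_outcome_set) (simp_all add: w_def)
    moreover have "\<forall>j<n. x' j \<in> A" using x w by (simp add: x'_def override_on_def)
    moreover have "(avoiding w)\<^sup>*\<^sup>* (x' d) v" using v(1) by (simp add: x'_def)
    ultimately have "g (x'(d := v)) = w" by (intro outcome_stays_avoiding)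
    moreover have "g (x'(d := v)) = g (pair_profile w v {d})"
      by (rule g_cong) (simp add: x'_def pair_profile_def override_on_def)
    moreover have "decisive w v {d}" using d E_sym[OF v(2)] unfolding dictates_def by simp
    ultimately show False using E_irrefl[OF v(2)] by (simp add: decisive_def)
  qed
  then show ?thesis using d(1) by blast
qed

end

section \<open>Preferences, paths and the top graph\<close>

lemma prefers_Cons: "prefers (x # L) y z \<longleftrightarrow> (y = x \<and> z \<in> set L) \<or> prefers L y z"
proof
  assume "prefers (x # L) y z"
  then obtain i j where ij: "i < j" "j < Suc (length L)" "(x # L) ! i = y" "(x # L) ! j = z"
    unfolding prefers_def by auto
  then obtain j' where j': "j = Suc j'" "j' < length L" "L ! j' = z" by (cases j) auto
  show "(y = x \<and> z \<in> set L) \<or> prefers L y z"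
  proof (cases i)
    case 0
    then show ?thesis using ij j' by auto
  next
    case (Suc i')
    then have "prefers L y z"
      unfolding prefers_def using ij j' by (intro exI[of _ i'] exI[of _ j']) auto
    then show ?thesis by blast
  qed
next
  assume "(y = x \<and> z \<in> set L) \<or> prefers L y z"
  then show "prefers (x # L) y z"
  proof
    assume "y = x \<and> z \<in> set L"
    then obtain k where "k < length L" "L ! k = z" "y = x" by (auto simp: in_set_conv_nth)
    then show ?thesis unfolding prefers_def by (intro exI[of _ 0] exI[of _ "Suc k"]) auto
  next
    assume "prefers L y z"
    then obtain i j where "i < j" "j < length L" "L ! i = y" "L ! j = z"
      unfolding prefers_def by blast
    then show ?thesis unfolding prefers_def by (intro exI[of _ "Suc i"] exI[of _ "Suc j"]) auto
  qed
qed

lemma prefers_total: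
  assumes "distinct L" "y \<in> set L" "z \<in> set L" "y \<noteq> z"
  shows "prefers L y z \<or> prefers L z y"
proof -
  obtain i j where "i < length L" "L ! i = y" "j < length L" "L ! j = z"
    using assms(2,3) by (auto simp: in_set_conv_nth)
  moreover have "i \<noteq> j" using calculation assms(4) by auto
  ultimately show ?thesis unfolding prefers_def by (metis linorder_neqE_nat)
qed

lemma outcomes_of_top_swap:
  assumes "distinct (u # v # rest)" "o1 \<in> set (u # v # rest)" "o2 \<in> set (u # v # rest)"
    and "\<not> prefers (u # v # rest) o2 o1" "\<not> prefers (v # u # rest) o1 o2"
  shows "o1 = o2 \<or> (o1 = u \<and> o2 = v)"
  using assms prefers_total[of rest o1 o2] by (auto simp: prefers_Cons)

lemma adjacent_sym:
  assumes "adjacent L L'"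
  shows "adjacent L' L"
proof -
  obtain k where k: "Suc k < length L" "L' = L[k := L ! Suc k, Suc k := L ! k]"
    using assms unfolding adjacent_def by blast
  then have "L = L'[k := L' ! Suc k, Suc k := L' ! k]"
    by (auto simp: list_eq_iff_nth_eq nth_list_update)
  then show ?thesis using k unfolding adjacent_def by auto
qed

lemma adjacent_top_change:
  assumes "adjacent L L'" "top L \<noteq> top L'"
  shows "\<exists>u v rest. L = u # v # rest \<and> L' = v # u # rest"
proof -
  obtain k where k: "Suc k < length L" "L' = L[k := L ! Suc k, Suc k := L ! k]"
    using assms(1) unfolding adjacent_def by blast
  then obtain u v rest where L: "L = u # v # rest"
    by (metis Suc_length_conv less_Suc_eq_0_disj list.size(3) not_less_zero neq_Nil_conv)
  show ?thesis
  proof (cases k)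
    case 0
    then show ?thesis using k L by simp
  next
    case (Suc k')
    then have "top L' = top L" using k L by (simp add: top_def)
    then show ?thesis using assms(2) by simp
  qed
qed

lemma successively_rtranclp: "successively R xs \<Longrightarrow> xs \<noteq> [] \<Longrightarrow> R\<^sup>*\<^sup>* (hd xs) (last xs)"
  by (induction xs rule: induct_list012) (auto intro: converse_rtranclp_into_rtranclp)

lemma is_path_iff:
  "is_path D ps \<longleftrightarrow> ps \<noteq> [] \<and> distinct ps \<and> set ps \<subseteq> D \<and> successively adjacent ps"
  by (simp add: is_path_def successively_conv_nth)

lemma is_path_extend:
  assumes ps: "is_path D ps" and "Q \<in> D" "adjacent (last ps) Q"
  shows "\<exists>ps'. is_path D ps' \<and> hd ps' = hd ps \<and> last ps' = Q \<and> set ps' \<subseteq> insert Q (set ps)"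
proof (cases "Q \<in> set ps")
  case True
  then obtain j where j: "j < length ps" "ps ! j = Q" by (auto simp: in_set_conv_nth)
  have "is_path D (take (Suc j) ps)"
    using ps successively_append_iff[of adjacent "take (Suc j) ps" "drop (Suc j) ps"]
    by (auto simp: is_path_iff dest: in_set_takeD)
  moreover have "last (take (Suc j) ps) = Q" using j by (simp add: take_Suc_conv_app_nth)
  moreover have "hd (take (Suc j) ps) = hd ps" using ps by (simp add: is_path_def)
  ultimately show ?thesis using set_take_subset[of "Suc j" ps] by blast
next
  case False
  then have "is_path D (ps @ [Q])"
    using assms by (auto simp: is_path_iff successively_append_iff)
  moreover have "hd (ps @ [Q]) = hd ps" using ps by (simp add: is_path_def)
  ultimately show ?thesis by force
qed

lemma top_connected_top: "top_connected D L Q \<Longrightarrow> top Q = top L"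
  unfolding top_connected_def is_path_def by (metis last_in_set)

lemma top_connected_extend:
  assumes "top_connected D L R" "Q \<in> D" "adjacent R Q" "top Q = top L"
  shows "top_connected D L Q"
proof -
  obtain ps where "is_path D ps" "hd ps = L" "last ps = R" "\<forall>Q\<in>set ps. top Q = top L"
    using assms(1) unfolding top_connected_def by blast
  then obtain ps' where "is_path D ps'" "hd ps' = L" "last ps' = Q" "\<forall>Q\<in>set ps'. top Q = top L"
    using is_path_extend[of D ps Q] assms(2-4) by blast
  then show ?thesis using assms(1,2) unfolding top_connected_def by blast
qed

lemma TCC_top_connected:
  assumes "L \<in> D" "R \<in> TCC D L"
  shows "top_connected D L R"
proof (cases "R = L")
  case True
  have "is_path D [L]" using assms(1) by (simp add: is_path_def)
  then show ?thesis using True assms(1) unfolding top_connected_def by force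
qed (use assms in \<open>simp add: TCC_def\<close>)

definition top_graph :: "'a list set \<Rightarrow> 'a \<Rightarrow> 'a \<Rightarrow> bool" where
  "top_graph D a b \<longleftrightarrow> a \<noteq> b \<and> (\<exists>L\<in>D. \<exists>L'\<in>D. adjacent L L' \<and> top L = a \<and> top L' = b)"

lemma top_graph_sym: "top_graph D a b \<Longrightarrow> top_graph D b a"
  unfolding top_graph_def by (metis adjacent_sym)

lemma neighbour_TCC_top_graph:
  assumes "L \<in> D" "neighbour D (TCC D L) Q"
  shows "top_graph D (top L) (top Q)"
proof -
  obtain R where Q: "Q \<in> D" "Q \<notin> TCC D L" and R: "R \<in> TCC D L" "adjacent R Q"
    using assms(2) unfolding neighbour_def by blast
  have tc: "top_connected D L R" using TCC_top_connected[OF assms(1) R(1)] .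
  then have "R \<in> D" "top R = top L" using top_connected_top unfolding top_connected_def by auto
  moreover have "top Q \<noteq> top L"
    using top_connected_extend[OF tc Q(1) R(2)] Q unfolding TCC_def by auto
  ultimately show ?thesis using Q(1) R(2) unfolding top_graph_def by metis
qed

lemma top_graph_of_path:
  assumes "is_path D ps"
  shows "(top_graph D)\<^sup>*\<^sup>* (top (hd ps)) (top (last ps))"
proof -
  have "successively (\<lambda>L L'. (top_graph D)\<^sup>=\<^sup>= (top L) (top L')) ps"
    using assms unfolding is_path_iff
    by (auto elim!: successively_mono simp: top_graph_def)
  then have "((top_graph D)\<^sup>=\<^sup>=)\<^sup>*\<^sup>* (hd (map top ps)) (last (map top ps))"
    using assms by (intro successively_rtranclp) (auto simp: successively_map is_path_def)
  then show ?thesis using assms by (simp add: is_path_def hd_map last_map)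
qed

lemma top_in_A: "linord A L \<Longrightarrow> A \<noteq> {} \<Longrightarrow> top L \<in> A"
  unfolding linord_def top_def by (metis hd_in_set set_empty)

lemma locally_sp_top_swap:
  assumes lsp: "locally_sp n D f" and lin: "\<forall>L\<in>D. linord A L" and fA: "\<forall>P\<in>profiles n D. f P \<in> A"
    and P: "P \<in> profiles n D" "i < n" and Q: "Q \<in> D" "adjacent (P i) Q" "top (P i) \<noteq> top Q"
  shows "f (P(i := Q)) = f P \<or> (f P = top (P i) \<and> f (P(i := Q)) = top Q)"
proof -
  obtain u v rest where uv: "P i = u # v # rest" "Q = v # u # rest"
    using adjacent_top_change Q(2,3) by blast
  have P': "P(i := Q) \<in> profiles n D"
    using PiE_fun_upd[of Q "\<lambda>_. D" i P "{..<n}"] P Q(1) by (simp add: profiles_def insert_absorb)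
  have "P i \<in> D" using PiE_mem P by (fastforce simp: profiles_def)
  have no_gain: "\<not> prefers (P i) (f (P(i := Q))) (f P)"
    if "P \<in> profiles n D" "Q \<in> D" "adjacent (P i) Q" for P Q
    using lsp that P(2) unfolding locally_sp_def by blast
  have "\<not> prefers (P i) (f (P(i := Q))) (f P)" using no_gain P(1) Q by blast
  moreover have "\<not> prefers Q (f P) (f (P(i := Q)))"
    using no_gain[OF P' \<open>P i \<in> D\<close>] adjacent_sym[OF Q(2)] by simp
  moreover have "distinct (P i)" "set (P i) = A"
    using lin \<open>P i \<in> D\<close> by (simp_all add: linord_def)
  moreover have "f P \<in> A" "f (P(i := Q)) \<in> A" using fA P(1) P' by simp_all
  ultimately have "f P = f (P(i := Q)) \<or> (f P = u \<and> f (P(i := Q)) = v)"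
    using outcomes_of_top_swap[of u v rest "f P" "f (P(i := Q))"] uv by simp
  then show ?thesis using uv by (auto simp: top_def)
qed

section \<open>Tops-only rules as rules on the top graph\<close>

text \<open>\<open>R a\<close> is some preference in the domain with top \<open>a\<close>; for a tops-only \<open>f\<close> the choice
does not matter.\<close>

definition tops_rule :: "nat \<Rightarrow> ('a \<Rightarrow> 'a list) \<Rightarrow> ((nat \<Rightarrow> 'a list) \<Rightarrow> 'a) \<Rightarrow> (nat \<Rightarrow> 'a) \<Rightarrow> 'a" where
  "tops_rule n R f x = f (restrict (R \<circ> x) {..<n})"

lemma tops_rule_profile:
  assumes "\<forall>a\<in>A. R a \<in> D \<and> top (R a) = a" "\<forall>i<n. x i \<in> A"
  shows "restrict (R \<circ> x) {..<n} \<in> profiles n D"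
  using assms by (auto simp: profiles_def)

lemma tops_only_tops_rule:
  assumes "tops_only n D f" and R: "\<forall>a\<in>A. R a \<in> D \<and> top (R a) = a"
    and "P \<in> profiles n D" "\<forall>i<n. top (P i) = x i" "\<forall>i<n. x i \<in> A"
  shows "f P = tops_rule n R f x"
proof -
  have "restrict (R \<circ> x) {..<n} \<in> profiles n D" using tops_rule_profile[OF R] assms(5) .
  moreover have "\<forall>i<n. top (P i) = top (restrict (R \<circ> x) {..<n} i)" using assms(4,5) R by simp
  ultimately show ?thesis using assms(1,3) unfolding tops_only_def tops_rule_def by blast
qed

lemma tops_rule_move_along_edge:
  assumes lsp: "locally_sp n D f" and to: "tops_only n D f" and lin: "\<forall>L\<in>D. linord A L"
    and fA: "\<forall>P\<in>profiles n D. f P \<in> A" and R: "\<forall>a\<in>A. R a \<in> D \<and> top (R a) = a"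
    and x: "\<forall>j<n. x j \<in> A" and e: "top_graph D (x i) b"
  shows "tops_rule n R f (x(i := b)) = tops_rule n R f x \<or>
    (tops_rule n R f x = x i \<and> tops_rule n R f (x(i := b)) = b)"
proof (cases "i < n")
  case False
  then have "restrict (R \<circ> x(i := b)) {..<n} = restrict (R \<circ> x) {..<n}" by auto
  then show ?thesis by (simp add: tops_rule_def)
next
  case True
  obtain L L' where L: "L \<in> D" "L' \<in> D" "adjacent L L'" "top L = x i" "top L' = b" "x i \<noteq> b"
    using e unfolding top_graph_def by blast
  have "A \<noteq> {}" using x True by blast
  then have "b \<in> A" using top_in_A lin L(2,5) by blast
  define P where "P = (restrict (R \<circ> x) {..<n})(i := L)"
  have P: "P \<in> profiles n D" "P(i := L') \<in> profiles n D"
    using PiE_fun_upd[of _ "\<lambda>_. D" i _ "{..<n}"] tops_rule_profile[OF R x] L True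
    by (simp_all add: P_def profiles_def insert_absorb)
  have "f P = tops_rule n R f x"
    using x R L(4) by (intro tops_only_tops_rule[OF to R P(1)]) (simp_all add: P_def)
  moreover have "f (P(i := L')) = tops_rule n R f (x(i := b))"
    using x R L(5) \<open>b \<in> A\<close> by (intro tops_only_tops_rule[OF to R P(2)]) (simp_all add: P_def)
  moreover have "f (P(i := L')) = f P \<or> (f P = top (P i) \<and> f (P(i := L')) = top L')"
    using L by (intro locally_sp_top_swap[OF lsp lin fA P(1) True]) (simp_all add: P_def)
  moreover have "P i = L" by (simp add: P_def)
  ultimately show ?thesis using L(4,5) by simp
qed

lemma graph_scf_tops_rule:
  assumes "finite A" "A \<noteq> {}" and lin: "\<forall>L\<in>D. linord A L" and R: "\<forall>a\<in>A. R a \<in> D \<and> top (R a) = a"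
    and D: "connected_two_neighbours D" and fA: "\<forall>P\<in>profiles n D. f P \<in> A"
    and un: "unanimous n D f" and to: "tops_only n D f" and lsp: "locally_sp n D f"
  shows "graph_scf A (top_graph D) n (tops_rule n R f)"
proof
  show "finite A" "A \<noteq> {}" by fact+
  show "top_graph D b a" if "top_graph D a b" for a b using top_graph_sym[OF that] .
  show "a \<noteq> b" if "top_graph D a b" for a b using that by (simp add: top_graph_def)
  show "a \<in> A \<and> b \<in> A" if "top_graph D a b" for a b
    using that top_in_A[OF _ \<open>A \<noteq> {}\<close>] lin unfolding top_graph_def by blast
  show "\<exists>b c. top_graph D a b \<and> top_graph D a c \<and> b \<noteq> c" if "a \<in> A" for a
  proof -
    have "top (R a) = a" "R a \<in> D" using R that by auto
    moreover obtain Q1 Q2 where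
      "neighbour D (TCC D (R a)) Q1" "neighbour D (TCC D (R a)) Q2" "top Q1 \<noteq> top Q2"
      using D \<open>R a \<in> D\<close> unfolding connected_two_neighbours_def by blast
    ultimately show ?thesis using neighbour_TCC_top_graph[of "R a" D] by auto
  qed
  show "(top_graph D)\<^sup>*\<^sup>* a b" if "a \<in> A" "b \<in> A" for a b
  proof -
    have "R a \<in> D" "R b \<in> D" using R that by auto
    then obtain ps where "is_path D ps" "hd ps = R a" "last ps = R b"
      using D unfolding connected_two_neighbours_def dom_connected_def by blast
    then show ?thesis using top_graph_of_path[of D ps] R that by simp
  qed
  show "tops_rule n R f x = tops_rule n R f y" if "\<And>i. i < n \<Longrightarrow> x i = y i" for x y
  proof -
    have "restrict (R \<circ> x) {..<n} = restrict (R \<circ> y) {..<n}" using that by auto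
    then show ?thesis by (simp add: tops_rule_def)
  qed
  show "tops_rule n R f x \<in> A" if "\<And>i. i < n \<Longrightarrow> x i \<in> A" for x
    using fA tops_rule_profile[OF R, of n x] that by (simp add: tops_rule_def)
  show "tops_rule n R f x = a" if "a \<in> A" "\<And>i. i < n \<Longrightarrow> x i = a" for a x
  proof -
    have "restrict (R \<circ> x) {..<n} \<in> profiles n D" using tops_rule_profile[OF R, of n x] that by simp
    moreover have "\<forall>i<n. top (restrict (R \<circ> x) {..<n} i) = a" using R that by simp
    ultimately show ?thesis using un that(1) unfolding unanimous_def tops_rule_def by blast
  qed
  show "tops_rule n R f (x(i := b)) = tops_rule n R f x \<or>
      (tops_rule n R f x = x i \<and> tops_rule n R f (x(i := b)) = b)"
    if "\<And>j. j < n \<Longrightarrow> x j \<in> A" "top_graph D (x i) b" for x i b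
    using that by (intro tops_rule_move_along_edge[OF lsp to lin fA R]) auto
qed

theorem proposition1:
  fixes A :: "'a set" and D :: "'a list set" and n :: nat
    and f :: "(nat \<Rightarrow> 'a list) \<Rightarrow> 'a"
  assumes "finite A" and "card A \<ge> 3" and "n \<ge> 2"
    and "\<forall>L\<in>D. linord A L"
    and "minimally_rich A D"
    and "connected_two_neighbours D"
    and "\<forall>P\<in>profiles n D. f P \<in> A"
    and "unanimous n D f" and "tops_only n D f" and "locally_sp n D f"
  shows "dictatorship n D f"
proof -
  have "A \<noteq> {}" using assms(2) by auto
  obtain R where R: "\<forall>a\<in>A. R a \<in> D \<and> top (R a) = a"
    using bchoice[OF assms(5)[unfolded minimally_rich_def Bex_def]] by blast
  interpret graph_scf A "top_graph D" n "tops_rule n R f"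
    by (rule graph_scf_tops_rule[OF assms(1) \<open>A \<noteq> {}\<close> assms(4) R assms(6-10)])
  obtain d where "d < n" and d: "\<forall>x. (\<forall>j<n. x j \<in> A) \<longrightarrow> tops_rule n R f x = x d"
    using dictator_exists by blast
  have "f P = top (P d)" if P: "P \<in> profiles n D" for P
  proof -
    have "\<forall>i<n. top (P i) \<in> A"
      using P assms(4) top_in_A[OF _ \<open>A \<noteq> {}\<close>] by (auto simp: profiles_def)
    then have "f P = tops_rule n R f (top \<circ> P)"
      using tops_only_tops_rule[OF assms(9) R P] by simp
    also have "\<dots> = top (P d)" using d \<open>\<forall>i<n. top (P i) \<in> A\<close> by simp
    finally show ?thesis .
  qed
  then show ?thesis using \<open>d < n\<close> unfolding dictatorship_def by blast
qed

end
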